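(* Let $d$ be a positive integer and let $A\in\mathbb{R}^{[m]\times[n]}$ be a matrix that does not have an elimination ordering. Let $E\subseteq[n]$ be the set produced by the following procedure: start with $E=\emptyset$; while $\mathrm{elm}(A,E)$ can be eliminated at some column, choose such a column $j\in[n]\setminus E$ and set $E\leftarrow E\cup\{j\}$. Let $\Delta=[n]\setminus E$ and let $A^r$ be the submatrix of $A$ consisting of the columns indexed by $\Delta$ (so $A^r\in\mathbb{R}^{[m]\times\Delta}$, and feasible solutions of $(A^r,b^r)$ lie in $D^{\Delta}$). If there exists $b^r\in\mathbb{R}^{[m]}$ such that the solution graph $G(R(A^r,b^r))$ is not connected, then there exists $b\in\mathbb{R}^{[m]}$ such that the solution graph $G(R(A,b))$ is not connected.
   Context: Fix a positive integer $d$ and let $D=\{0,1,\dots,d\}$; $[n]=\{1,\dots,n\}$. For a real matrix $A$ with row set $[m]$ and column index set $J$, and $b\in\mathbb{R}^{[m]}$, $R(A,b)=\{x\in D^{J} : Ax\ge b\}$. For $R\subseteq D^{J}$, the solution graph $G(R)$ is the undirected graph with vertex set $R$ in which $x,y$ are adjacent iff they differ in exactly one coordinate. A matrix $A=(a_{ij})$ with column index set $J$ can be eliminated at column $j\in J$ if (i) for every row $i$ with $a_{ij}>0$ we have $a_{ij'}=0$ for all $j'\in J\setminus\{j\}$, or (ii) for every row $i$ with $a_{ij}<0$ we have $a_{ij'}=0$ for all $j'\in J\setminus\{j\}$. For $J'\subseteq[n]$, $\mathrm{elm}(A,J')$ is the submatrix of $A$ obtained by deleting the columns indexed by $J'$.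 A sequence $(j_1,\dots,j_n)$ of the elements of $[n]$ is an elimination ordering (EO) of $A\in\mathbb{R}^{[m]\times[n]}$ if for every $t\in[n]$ the matrix $\mathrm{elm}(A,\{j_1,\dots,j_{t-1}\})$ can be eliminated at column $j_t$. *)

theory Defs
  imports Complex_Main
begin

(* Matrices A :: nat => nat => real, rows indexed by {1..m}, columns by a set J \<subseteq> {1..n}.
   A vector x \<in> D^J is a function nat => nat with x j \<le> d on J and x j = 0 off J
   (canonical representative). *)

definition sol_set :: "nat \<Rightarrow> nat \<Rightarrow> nat set \<Rightarrow> (nat \<Rightarrow> nat \<Rightarrow> real) \<Rightarrow> (nat \<Rightarrow> real) \<Rightarrow> (nat \<Rightarrow> nat) set" where
  "sol_set d m J A b = {x. (\<forall>j\<in>J. x j \<le> d) \<and> (\<forall>j. j \<notin> J \<longrightarrow> x j = 0) \<and>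
      (\<forall>i\<in>{1..m}. (\<Sum>j\<in>J. A i j * real (x j)) \<ge> b i)}"

definition adjacent :: "nat set \<Rightarrow> (nat \<Rightarrow> nat) \<Rightarrow> (nat \<Rightarrow> nat) \<Rightarrow> bool" where
  "adjacent J x y \<longleftrightarrow> card {j\<in>J. x j \<noteq> y j} = 1"

definition sol_graph_connected :: "nat set \<Rightarrow> (nat \<Rightarrow> nat) set \<Rightarrow> bool" where
  "sol_graph_connected J R \<longleftrightarrow>
     (\<forall>x\<in>R. \<forall>y\<in>R. (x, y) \<in> {(u, v). u \<in> R \<and> v \<in> R \<and> adjacent J u v}\<^sup>*)"

definition can_elim :: "nat \<Rightarrow> (nat \<Rightarrow> nat \<Rightarrow> real) \<Rightarrow> nat set \<Rightarrow> nat \<Rightarrow> bool" where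
  "can_elim m A J j \<longleftrightarrow>
     (\<forall>i\<in>{1..m}. A i j > 0 \<longrightarrow> (\<forall>j'\<in>J - {j}. A i j' = 0)) \<or>
     (\<forall>i\<in>{1..m}. A i j < 0 \<longrightarrow> (\<forall>j'\<in>J - {j}. A i j' = 0))"

(* elm(A, J') has column set {1..n} - J' *)
definition is_EO :: "nat \<Rightarrow> nat \<Rightarrow> (nat \<Rightarrow> nat \<Rightarrow> real) \<Rightarrow> nat list \<Rightarrow> bool" where
  "is_EO m n A js \<longleftrightarrow> distinct js \<and> set js = {1..n} \<and>
     (\<forall>t<n. can_elim m A ({1..n} - set (take t js)) (js ! t))"

definition has_EO :: "nat \<Rightarrow> nat \<Rightarrow> (nat \<Rightarrow> nat \<Rightarrow> real) \<Rightarrow> bool" where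
  "has_EO m n A \<longleftrightarrow> (\<exists>js. is_EO m n A js)"

definition greedy_run :: "nat \<Rightarrow> nat \<Rightarrow> (nat \<Rightarrow> nat \<Rightarrow> real) \<Rightarrow> nat list \<Rightarrow> bool" where
  "greedy_run m n A es \<longleftrightarrow> distinct es \<and> set es \<subseteq> {1..n} \<and>
     (\<forall>t<length es. can_elim m A ({1..n} - set (take t es)) (es ! t)) \<and>
     (\<forall>j\<in>{1..n} - set es. \<not> can_elim m A ({1..n} - set es) j)"

end

theory Submission
  imports Defs
begin

(* Every column e eliminated by the greedy procedure was eliminable while all remaining columns
   were still present, so on the rows that meet a remaining column A i e has a fixed sign.
   Freezing x e at 0 or d according to that sign makes each such term as large as possible.
   Setting b := b^r + (contribution of the frozen columns), solutions of (A^r, b^r) extend by the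
   frozen values to solutions of (A, b), and conversely restricting a solution of (A, b) to the
   remaining columns gives a solution of (A^r, b^r), since the frozen columns can only lose.
   Restriction maps edges of G(R(A, b)) to edges or loops, so G(R(A^r, b^r)) is a retract of
   G(R(A, b)) and inherits its connectivity. *)

lemma rtrancl_map_collapsing:
  assumes "(x, y) \<in> r\<^sup>*"
    and "\<And>u v. (u, v) \<in> r \<Longrightarrow> f u = f v \<or> (f u, f v) \<in> s"
  shows "(f x, f y) \<in> s\<^sup>*"
  using assms(1)
proof (induction rule: rtrancl_induct)
  case base
  show ?case by simp
next
  case (step y z)
  then show ?case
    using assms(2) by (metis rtrancl.rtrancl_into_rtrancl)
qed

lemma sol_graph_connected_retract:
  assumes "sol_graph_connected J R"
    and "g ` R' \<subseteq> R" and "f ` R \<subseteq> R'" and "\<And>x. x \<in> R' \<Longrightarrow> f (g x) = x"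
    and "\<And>x y. x \<in> R \<Longrightarrow> y \<in> R \<Longrightarrow> adjacent J x y \<Longrightarrow> f x = f y \<or> adjacent J' (f x) (f y)"
  shows "sol_graph_connected J' R'"
  unfolding sol_graph_connected_def
proof (intro ballI)
  fix x y assume "x \<in> R'" "y \<in> R'"
  let ?G = "{(u, v). u \<in> R \<and> v \<in> R \<and> adjacent J u v}"
  let ?G' = "{(u, v). u \<in> R' \<and> v \<in> R' \<and> adjacent J' u v}"
  have "(g x, g y) \<in> ?G\<^sup>*"
    using assms(1,2) \<open>x \<in> R'\<close> \<open>y \<in> R'\<close> unfolding sol_graph_connected_def by blast
  then have "(f (g x), f (g y)) \<in> ?G'\<^sup>*"
    by (rule rtrancl_map_collapsing) (use assms(3,5) in blast)
  then show "(x, y) \<in> ?G'\<^sup>*"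
    using assms(4) \<open>x \<in> R'\<close> \<open>y \<in> R'\<close> by simp
qed

definition restrict_cols :: "nat set \<Rightarrow> (nat \<Rightarrow> nat) \<Rightarrow> nat \<Rightarrow> nat" where
  "restrict_cols K x j = (if j \<in> K then x j else 0)"

lemma adjacent_restrict_cols:
  assumes "K \<subseteq> J" and "adjacent J x y"
  shows "restrict_cols K x = restrict_cols K y \<or> adjacent K (restrict_cols K x) (restrict_cols K y)"
proof -
  obtain k where k: "{j\<in>J. x j \<noteq> y j} = {k}"
    using assms(2) unfolding adjacent_def by (meson card_1_singletonE)
  have "{j\<in>K. restrict_cols K x j \<noteq> restrict_cols K y j} \<subseteq> {k}"
    using k assms(1) unfolding restrict_cols_def by auto
  then consider "{j\<in>K. restrict_cols K x j \<noteq> restrict_cols K y j} = {}"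
    | "{j\<in>K. restrict_cols K x j \<noteq> restrict_cols K y j} = {k}"
    by blast
  then show ?thesis
  proof cases
    case 1
    then have "restrict_cols K x = restrict_cols K y"
      unfolding restrict_cols_def by (auto intro!: ext)
    then show ?thesis by simp
  next
    case 2
    then show ?thesis unfolding adjacent_def by simp
  qed
qed

lemma can_elim_sign_on_rows:
  assumes "can_elim m A J e" and "K \<subseteq> J - {e}"
  shows "(\<forall>i\<in>{1..m}. (\<exists>j\<in>K. A i j \<noteq> 0) \<longrightarrow> A i e \<le> 0) \<or>
         (\<forall>i\<in>{1..m}. (\<exists>j\<in>K. A i j \<noteq> 0) \<longrightarrow> A i e \<ge> 0)"
  using assms unfolding can_elim_def by (meson linorder_not_le subsetD)

lemma greedy_run_eliminable_with_remaining:
  assumes "greedy_run m n A es" and "e \<in> set es"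
  shows "\<exists>J. can_elim m A J e \<and> {1..n} - set es \<subseteq> J - {e}"
proof -
  obtain t where t: "t < length es" "es ! t = e"
    using assms(2) by (meson in_set_conv_nth)
  have "can_elim m A ({1..n} - set (take t es)) e"
    using assms(1) t unfolding greedy_run_def by auto
  moreover have "{1..n} - set es \<subseteq> {1..n} - set (take t es) - {e}"
    using set_take_subset assms(2) by fastforce
  ultimately show ?thesis by blast
qed

lemma greedy_run_maximizing_value:
  assumes "greedy_run m n A es" and "e \<in> set es"
  shows "\<exists>v\<le>d. \<forall>i\<in>{1..m}. (\<exists>j\<in>{1..n} - set es. A i j \<noteq> 0) \<longrightarrow>
           (\<forall>y\<le>d. A i e * real y \<le> A i e * real v)"
proof -
  obtain J where "can_elim m A J e" "{1..n} - set es \<subseteq> J - {e}"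
    using greedy_run_eliminable_with_remaining[OF assms] by blast
  from can_elim_sign_on_rows[OF this] show ?thesis
  proof
    assume "\<forall>i\<in>{1..m}. (\<exists>j\<in>{1..n} - set es. A i j \<noteq> 0) \<longrightarrow> A i e \<le> 0"
    then show ?thesis
      by (intro exI[of _ 0]) (simp add: mult_nonpos_nonneg)
  next
    assume "\<forall>i\<in>{1..m}. (\<exists>j\<in>{1..n} - set es. A i j \<noteq> 0) \<longrightarrow> A i e \<ge> 0"
    then show ?thesis
      by (intro exI[of _ d]) (simp add: mult_left_mono)
  qed
qed

lemma sol_set_rhs_nonpos_on_zero_row:
  assumes "x \<in> sol_set d m K A b" and "i \<in> {1..m}" and "\<forall>j\<in>K. A i j = 0"
  shows "b i \<le> 0"
proof -
  have "(\<Sum>j\<in>K. A i j * real (x j)) = 0"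
    using assms(3) by simp
  then show ?thesis
    using assms(1,2) unfolding sol_set_def by fastforce
qed

lemma disconnected_extend_by_maximizers:
  assumes "finite N" and "K \<subseteq> N"
    and v_le: "\<And>e. e \<in> N - K \<Longrightarrow> v e \<le> d"
    and v_max: "\<And>i e y. i \<in> {1..m} \<Longrightarrow> \<exists>j\<in>K. A i j \<noteq> 0 \<Longrightarrow> e \<in> N - K \<Longrightarrow> y \<le> d \<Longrightarrow>
                  A i e * real y \<le> A i e * real (v e)"
    and "\<not> sol_graph_connected K (sol_set d m K A br)"
  shows "\<exists>b. \<not> sol_graph_connected N (sol_set d m N A b)"
proof -
  let ?R' = "sol_set d m K A br"
  define b where "b i = br i + (\<Sum>e\<in>N - K. A i e * real (v e))" for i
  define ext where "ext u j = (if j \<in> K then u j else if j \<in> N then v j else 0)" for u j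
  let ?R = "sol_set d m N A b"
  have sum_split: "(\<Sum>j\<in>N. f j) = (\<Sum>j\<in>K. f j) + (\<Sum>j\<in>N - K. f j)" for f :: "nat \<Rightarrow> real"
    using assms(1,2) by (metis add.commute sum.subset_diff)
  \<comment> \<open>a disconnected graph has a vertex; this forces br i \<le> 0 on the rows vanishing on K\<close>
  obtain p where "p \<in> ?R'"
    using assms(5) unfolding sol_graph_connected_def by blast
  have ext_sol: "ext u \<in> ?R" if u: "u \<in> ?R'" for u
  proof -
    have "(\<Sum>j\<in>N. A i j * real (ext u j)) =
          (\<Sum>j\<in>K. A i j * real (u j)) + (\<Sum>e\<in>N - K. A i e * real (v e))" for i
      unfolding sum_split[of "\<lambda>j. A i j * real (ext u j)"]
      by (intro arg_cong2[where f = "(+)"] sum.cong) (use assms(2) in \<open>auto simp: ext_def\<close>)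
    then show ?thesis
      using u assms(2) v_le unfolding sol_set_def b_def ext_def by auto
  qed
  have restrict_sol: "restrict_cols K x \<in> ?R'" if x: "x \<in> ?R" for x
  proof -
    have "br i \<le> (\<Sum>j\<in>K. A i j * real (x j))" if i: "i \<in> {1..m}" for i
    proof (cases "\<exists>j\<in>K. A i j \<noteq> 0")
      case True
      have "(\<Sum>e\<in>N - K. A i e * real (x e)) \<le> (\<Sum>e\<in>N - K. A i e * real (v e))"
        using x v_max[OF i True] unfolding sol_set_def by (intro sum_mono) auto
      moreover have "b i \<le> (\<Sum>j\<in>N. A i j * real (x j))"
        using x i unfolding sol_set_def by auto
      ultimately show ?thesis
        unfolding sum_split b_def by linarith
    next
      case False
      then show ?thesis
        using sol_set_rhs_nonpos_on_zero_row[OF \<open>p \<in> ?R'\<close> i] by simp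
    qed
    moreover have "(\<Sum>j\<in>K. A i j * real (restrict_cols K x j)) = (\<Sum>j\<in>K. A i j * real (x j))" for i
      unfolding restrict_cols_def by simp
    ultimately show ?thesis
      using x assms(2) unfolding sol_set_def restrict_cols_def by auto
  qed
  have "restrict_cols K (ext u) = u" if "u \<in> ?R'" for u
    using that unfolding restrict_cols_def ext_def sol_set_def by auto
  then show ?thesis
    using sol_graph_connected_retract[of N ?R ext ?R' "restrict_cols K" K]
      ext_sol restrict_sol adjacent_restrict_cols[OF assms(2)] assms(5) by blast
qed

theorem lemma2:
  fixes d m n :: nat and A :: "nat \<Rightarrow> nat \<Rightarrow> real" and es :: "nat list"
    and br :: "nat \<Rightarrow> real"
  assumes "d > 0"
    and "\<not> has_EO m n A"
    and "greedy_run m n A es"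
    and "\<not> sol_graph_connected ({1..n} - set es) (sol_set d m ({1..n} - set es) A br)"
  shows "\<exists>b :: nat \<Rightarrow> real. \<not> sol_graph_connected {1..n} (sol_set d m {1..n} A b)"
proof -
  have "\<forall>e\<in>set es. \<exists>v\<le>d. \<forall>i\<in>{1..m}. (\<exists>j\<in>{1..n} - set es. A i j \<noteq> 0) \<longrightarrow>
          (\<forall>y\<le>d. A i e * real y \<le> A i e * real v)"
    using greedy_run_maximizing_value[OF assms(3)] by blast
  then obtain v where "\<forall>e\<in>set es. v e \<le> d \<and> (\<forall>i\<in>{1..m}. (\<exists>j\<in>{1..n} - set es. A i j \<noteq> 0) \<longrightarrow>
                   (\<forall>y\<le>d. A i e * real y \<le> A i e * real (v e)))"
    by (metis bchoice)
  moreover have "{1..n} - ({1..n} - set es) = set es"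
    using assms(3) unfolding greedy_run_def by auto
  ultimately show ?thesis
    using disconnected_extend_by_maximizers[of "{1..n}" "{1..n} - set es" v d m A br] assms(4)
    by auto
qed

end
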